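(* Let $z$ be an indeterminate and $c=1+(q-1)z$. For every $n\ge0$, $$\frac{1}{z}\int_0^z\beta_n(y)\,dy=\frac{1}{(q-1)^n}\sum_{k=0}^{n}\binom{n}{k}(-1)^{n-k}\frac{[k+1]_c}{[k+1]_q}.$$
   Context: $q$ is an indeterminate. The $q$-Bernoulli–Carlitz numbers $\beta_n\in\mathbb{Q}(q)$ are defined by: for all $n\ge0$, $q\sum_{k=0}^{n}\binom{n}{k}q^k\beta_k-\beta_n$ equals $q-1$ if $n=0$, $1$ if $n=1$, and $0$ if $n>1$. Let $\Psi$ be the $\mathbb{Q}(q)$-linear form on $\mathbb{Q}(q)[x]$ with $\Psi(x^n)=\beta_n$, extended $\mathbb{Q}(q)[z]$-linearly to $\mathbb{Q}(q)[z][x]$. The $q$-Bernoulli–Carlitz polynomials are $\beta_n(z)=\Psi\big((z+(z(q-1)+1)x)^n\big)\in\mathbb{Q}(q)[z]$, and $\int_0^z\beta_n(y)\,dy$ is the ordinary integral of this polynomial. $[m]_q=(q^m-1)/(q-1)$ and $[m]_c=(c^m-1)/(c-1)=1+c+\dots+c^{m-1}$. *)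

theory Defs
  imports "HOL-Computational_Algebra.Polynomial" "HOL-Computational_Algebra.Fraction_Field"
begin

type_synonym Qq = "rat poly fract"

definition qvar :: Qq where "qvar = Fract [:0, 1:] 1"

definition is_qBC_numbers :: "(nat \<Rightarrow> Qq) \<Rightarrow> bool" where
  "is_qBC_numbers \<beta> \<longleftrightarrow> (\<forall>n.
     qvar * (\<Sum>k\<le>n. of_nat (n choose k) * qvar ^ k * \<beta> k) - \<beta> n =
       (if n = 0 then qvar - 1 else if n = 1 then 1 else 0))"

text \<open>Psi: linear form x^n \<mapsto> beta_n, extended Q(q)[z]-linearly to Q(q)[z][x]
  (outer polynomial variable = x, coefficients in Q(q)[z]).\<close>
definition Psi :: "(nat \<Rightarrow> Qq) \<Rightarrow> Qq poly poly \<Rightarrow> Qq poly" where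
  "Psi \<beta> p = (\<Sum>i\<le>degree p. smult (\<beta> i) (coeff p i))"

definition cpoly :: "Qq poly" where "cpoly = [:1, qvar - 1:]"

text \<open>beta_n(z) = Psi((z + (z(q-1)+1) x)^n).\<close>
definition qBC_poly :: "(nat \<Rightarrow> Qq) \<Rightarrow> nat \<Rightarrow> Qq poly" where
  "qBC_poly \<beta> n = Psi \<beta> ([:[:0, 1:], cpoly:] ^ n)"

definition poly_integral :: "Qq poly \<Rightarrow> Qq poly" where
  "poly_integral p = (\<Sum>i\<le>degree p. monom (coeff p i / of_nat (i + 1)) (i + 1))"

definition qint :: "nat \<Rightarrow> Qq" where "qint m = (qvar ^ m - 1) / (qvar - 1)"

definition cint :: "nat \<Rightarrow> Qq poly" where "cint m = (\<Sum>j<m. cpoly ^ j)"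

end

theory Submission
  imports Defs
begin

text \<open>
  The defining relation of the numbers \<open>\<beta>\<^sub>n\<close> says that for every \<open>f \<in> \<bbbQ>(q)[z][x]\<close>
  \<open>q \<Psi>(f(1 + q x)) - \<Psi>(f) = (q - 1) f(0) + f'(0)\<close>: both sides are \<open>\<bbbQ>(q)[z]\<close>-linear in \<open>f\<close>
  and the case \<open>f = x\<^sup>n\<close> is the definition. The polynomial \<open>Y = 1 + (q - 1) x\<close> satisfies
  \<open>Y(1 + q x) = q Y\<close>, so the relation for \<open>f = Y\<^sup>k\<close> determines \<open>\<Psi>(Y\<^sup>k) = (k + 1) / [k + 1]\<^sub>q\<close>.
  Since \<open>(q - 1) z = c - 1\<close>, we have \<open>(q - 1)(z + c x) = c Y - 1\<close>, and the binomial theorem gives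
  \<open>(q - 1)\<^sup>n \<beta>\<^sub>n(z) = \<Sum>\<^sub>k (n choose k) (-1)\<^sup>n\<^sup>-\<^sup>k (k + 1) c\<^sup>k / [k + 1]\<^sub>q\<close>.
  Finally \<open>z [k + 1]\<^sub>c = (c\<^sup>k\<^sup>+\<^sup>1 - 1) / (q - 1)\<close> is the antiderivative of \<open>(k + 1) c\<^sup>k\<close>
  vanishing at \<open>0\<close>.
\<close>

lemma of_nat_Suc_Qq_neq_0: "(of_nat (Suc n) :: Qq) \<noteq> 0"
  by (simp add: of_nat_fract Zero_fract_def eq_fract del: of_nat_Suc)

lemma qvar_power: "qvar ^ m = Fract ([:0, 1:] ^ m) 1"
  by (induction m) (simp_all add: qvar_def One_fract_def)

lemma qvar_power_neq_1: "m > 0 \<Longrightarrow> qvar ^ m \<noteq> 1"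
proof
  assume "m > 0" "qvar ^ m = 1"
  then have "([:0, 1:] :: rat poly) ^ m = 1"
    by (simp add: qvar_power One_fract_def eq_fract)
  then have "degree (([:0, 1:] :: rat poly) ^ m) = 0" by simp
  with \<open>m > 0\<close> show False by (simp add: degree_power_eq)
qed

lemma qvar_minus_1_neq_0: "qvar - 1 \<noteq> 0"
  using qvar_power_neq_1[of 1] by simp

lemma smult_sum_right: "smult a (\<Sum>i\<in>A. f i) = (\<Sum>i\<in>A. smult a (f i))"
  by (induction A rule: infinite_finite_induct) (simp_all add: smult_add_right)

lemma pcompose_power: "pcompose (p ^ n) r = pcompose p r ^ n"
  by (induction n) (simp_all add: pcompose_mult pcompose_1)

lemma pderiv_sum: "pderiv (\<Sum>i\<in>A. f i) = (\<Sum>i\<in>A. pderiv (f i))"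
  by (induction A rule: infinite_finite_induct) (simp_all add: pderiv_add)

lemma pCons_1_power: "[:1, a:] ^ n = (\<Sum>k\<le>n. smult (of_nat (n choose k)) (monom (a ^ k) k))"
proof -
  have "[:1, a:] = monom a 1 + 1" by (simp add: monom_altdef one_pCons)
  then have "[:1, a:] ^ n = (\<Sum>k\<le>n. of_nat (n choose k) * monom a 1 ^ k * 1 ^ (n - k))"
    by (simp add: binomial_ring)
  then show ?thesis by (simp add: monom_power of_nat_poly)
qed

lemma minus_1_power_poly: "(-1 :: 'a::comm_ring_1 poly) ^ n = [:(-1) ^ n:]"
  by (induction n) (simp_all add: one_pCons)

lemma smult_minus_1_power:
  fixes p :: "'a::comm_ring_1 poly"
  shows "(smult a p - 1) ^ n = (\<Sum>k\<le>n. smult (of_nat (n choose k) * (-1) ^ (n - k) * a ^ k) (p ^ k))"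
proof -
  have "(smult a p - 1) ^ n = (\<Sum>k\<le>n. of_nat (n choose k) * smult a p ^ k * (-1) ^ (n - k))"
    using binomial_ring[of "smult a p" "-1" n] by simp
  then show ?thesis
    by (simp add: minus_1_power_poly smult_power of_nat_poly mult_ac)
qed

lemma Psi_eq_sum_atMost: "degree p \<le> N \<Longrightarrow> Psi \<beta> p = (\<Sum>i\<le>N. smult (\<beta> i) (coeff p i))"
  unfolding Psi_def by (rule sum.mono_neutral_left) (auto simp: coeff_eq_0)

lemma Psi_add: "Psi \<beta> (p + q) = Psi \<beta> p + Psi \<beta> q"
proof -
  let ?N = "max (degree p) (degree q)"
  have "Psi \<beta> (p + q) = (\<Sum>i\<le>?N. smult (\<beta> i) (coeff (p + q) i))"
    by (rule Psi_eq_sum_atMost) (simp add: degree_add_le)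
  also have "\<dots> = (\<Sum>i\<le>?N. smult (\<beta> i) (coeff p i)) + (\<Sum>i\<le>?N. smult (\<beta> i) (coeff q i))"
    by (simp add: smult_add_right sum.distrib)
  also have "\<dots> = Psi \<beta> p + Psi \<beta> q"
    by (simp add: Psi_eq_sum_atMost[of p ?N] Psi_eq_sum_atMost[of q ?N])
  finally show ?thesis .
qed

lemma Psi_smult: "Psi \<beta> (smult a p) = a * Psi \<beta> p"
proof -
  have "Psi \<beta> (smult a p) = (\<Sum>i\<le>degree p. smult (\<beta> i) (coeff (smult a p) i))"
    by (rule Psi_eq_sum_atMost) simp
  then show ?thesis by (simp add: Psi_def sum_distrib_left mult_ac)
qed

lemma Psi_0 [simp]: "Psi \<beta> 0 = 0"
  by (simp add: Psi_def)

lemma Psi_sum: "Psi \<beta> (\<Sum>i\<in>A. f i) = (\<Sum>i\<in>A. Psi \<beta> (f i))"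
  by (induction A rule: infinite_finite_induct) (simp_all add: Psi_add)

lemma Psi_monom: "Psi \<beta> (monom a k) = smult (\<beta> k) a"
proof -
  have "Psi \<beta> (monom a k) = (\<Sum>i\<le>k. smult (\<beta> i) (coeff (monom a k) i))"
    by (rule Psi_eq_sum_atMost) (simp add: degree_monom_le)
  then show ?thesis by (simp add: coeff_monom if_distrib cong: if_cong)
qed

lemma Psi_pCons_1_power:
  "Psi \<beta> ([:1, [:a:]:] ^ n) = [:\<Sum>k\<le>n. of_nat (n choose k) * a ^ k * \<beta> k:]"
proof -
  have "Psi \<beta> ([:1, [:a:]:] ^ n) = (\<Sum>k\<le>n. [:of_nat (n choose k) * a ^ k * \<beta> k:])"
    by (simp add: pCons_1_power Psi_sum Psi_smult Psi_monom poly_const_pow of_nat_poly mult_ac)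
  then show ?thesis by (simp add: sum_to_poly)
qed

lemma Psi_functional_equation_monom:
  assumes "is_qBC_numbers \<beta>"
  shows "smult qvar (Psi \<beta> (pcompose (monom a i) [:1, [:qvar:]:])) - Psi \<beta> (monom a i)
        = smult (qvar - 1) (poly (monom a i) 0) + poly (pderiv (monom a i)) 0"
proof -
  have "pcompose (monom a i) [:1, [:qvar:]:] = smult a ([:1, [:qvar:]:] ^ i)"
    by (simp add: monom_altdef pcompose_smult pcompose_power pcompose_pCons)
  then have "Psi \<beta> (pcompose (monom a i) [:1, [:qvar:]:])
      = smult (\<Sum>k\<le>i. of_nat (i choose k) * qvar ^ k * \<beta> k) a"
    by (simp add: Psi_smult Psi_pCons_1_power)
  then have "smult qvar (Psi \<beta> (pcompose (monom a i) [:1, [:qvar:]:])) - Psi \<beta> (monom a i)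
      = smult (qvar * (\<Sum>k\<le>i. of_nat (i choose k) * qvar ^ k * \<beta> k) - \<beta> i) a"
    by (simp add: Psi_monom smult_diff_left)
  also have "\<dots> = smult (if i = 0 then qvar - 1 else if i = 1 then 1 else 0) a"
    using assms unfolding is_qBC_numbers_def by presburger
  also have "\<dots> = smult (qvar - 1) (poly (monom a i) 0) + poly (pderiv (monom a i)) 0"
    by (cases i) (auto simp: pderiv_monom poly_monom)
  finally show ?thesis .
qed

lemma Psi_functional_equation:
  assumes "is_qBC_numbers \<beta>"
  shows "smult qvar (Psi \<beta> (pcompose p [:1, [:qvar:]:])) - Psi \<beta> p
        = smult (qvar - 1) (poly p 0) + poly (pderiv p) 0"
proof -
  have p: "p = (\<Sum>i\<le>degree p. monom (coeff p i) i)"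
    by (simp add: poly_as_sum_of_monoms)
  show ?thesis
    by (subst (1 2 3 4) p)
      (simp add: pcompose_sum Psi_sum pderiv_sum poly_sum smult_sum_right
        sum_subtractf[symmetric] sum.distrib[symmetric] Psi_functional_equation_monom[OF assms])
qed

lemma Psi_Y_power:
  assumes "is_qBC_numbers \<beta>"
  shows "Psi \<beta> ([:1, [:qvar - 1:]:] ^ k) = [:of_nat (Suc k) / qint (Suc k):]"
proof -
  let ?Y = "[:1, [:qvar - 1:]:]" and ?P = "Psi \<beta> ([:1, [:qvar - 1:]:] ^ k)"
  have "pcompose ?Y [:1, [:qvar:]:] = smult [:qvar:] ?Y"
    by (simp add: pcompose_pCons algebra_simps one_pCons)
  then have "pcompose (?Y ^ k) [:1, [:qvar:]:] = smult [:qvar ^ k:] (?Y ^ k)"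
    by (simp only: pcompose_power smult_power poly_const_pow)
  moreover have "poly (pderiv (?Y ^ k)) 0 = [:of_nat k * (qvar - 1):]"
    by (simp add: pderiv_power pderiv_pCons poly_const_pow of_nat_poly)
  ultimately have "smult (qvar * qvar ^ k) ?P - ?P = [:qvar - 1:] + [:of_nat k * (qvar - 1):]"
    using Psi_functional_equation[OF assms, of "?Y ^ k"] by (simp add: Psi_smult)
  then have scaled: "smult (qvar ^ Suc k - 1) ?P = [:of_nat (Suc k) * (qvar - 1):]"
    by (simp add: smult_diff_left algebra_simps)
  have "qvar ^ Suc k - 1 \<noteq> 0"
    using qvar_power_neq_1[of "Suc k"] by simp
  then have "?P = smult (1 / (qvar ^ Suc k - 1)) (smult (qvar ^ Suc k - 1) ?P)"
    by simp
  also have "\<dots> = [:of_nat (Suc k) * (qvar - 1) / (qvar ^ Suc k - 1):]"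
    unfolding scaled by simp
  finally show ?thesis
    using qvar_minus_1_neq_0 by (simp add: qint_def)
qed

lemma qBC_poly_scaled:
  assumes "is_qBC_numbers \<beta>"
  shows "smult ((qvar - 1) ^ n) (qBC_poly \<beta> n) =
    (\<Sum>k\<le>n. smult (of_nat (n choose k) * (-1) ^ (n - k) * of_nat (Suc k) / qint (Suc k)) (cpoly ^ k))"
proof -
  let ?Y = "[:1, [:qvar - 1:]:]"
  have linear_factor: "smult [:qvar - 1:] [:[:0, 1:], cpoly:] = smult cpoly ?Y - 1"
    by (simp add: cpoly_def one_pCons algebra_simps)
  have "smult ((qvar - 1) ^ n) (qBC_poly \<beta> n) = Psi \<beta> (smult [:qvar - 1:] [:[:0, 1:], cpoly:] ^ n)"
    by (simp only: qBC_poly_def smult_power Psi_smult poly_const_pow) simp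
  also have "\<dots> = (\<Sum>k\<le>n. smult (of_nat (n choose k) * (-1) ^ (n - k) * of_nat (Suc k) / qint (Suc k)) (cpoly ^ k))"
    unfolding linear_factor smult_minus_1_power Psi_sum Psi_smult Psi_Y_power[OF assms]
    by (simp add: minus_1_power_poly of_nat_poly mult_ac del: of_nat_Suc)
  finally show ?thesis .
qed

lemma poly_integral_eqI:
  assumes "pderiv r = p" "coeff r 0 = 0"
  shows "poly_integral p = r"
proof (rule poly_eqI)
  fix j
  show "coeff (poly_integral p) j = coeff r j"
  proof (cases j)
    case 0
    with assms(2) show ?thesis by (simp add: poly_integral_def coeff_sum coeff_monom)
  next
    case (Suc m)
    have "coeff (poly_integral p) j = (\<Sum>i\<le>degree p. if i = m then coeff p i / of_nat (i + 1) else 0)"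
      by (simp add: poly_integral_def coeff_sum coeff_monom Suc cong: if_cong)
    also have "\<dots> = coeff p m / of_nat (Suc m)"
      by (cases "m \<le> degree p") (auto simp: coeff_eq_0)
    also have "\<dots> = coeff r j"
      using assms(1) of_nat_Suc_Qq_neq_0[of m]
      by (simp add: Suc coeff_pderiv[of r m, unfolded assms(1)] del: of_nat_Suc)
    finally show ?thesis .
  qed
qed

lemma X_mult_cint: "[:0, 1:] * cint m = smult (1 / (qvar - 1)) (cpoly ^ m - 1)"
proof -
  have "cpoly - 1 = smult (qvar - 1) [:0, 1:]"
    by (simp add: cpoly_def one_pCons)
  then have "cpoly ^ m - 1 = smult (qvar - 1) ([:0, 1:] * cint m)"
    by (simp add: power_diff_1_eq cint_def)
  then show ?thesis
    using qvar_minus_1_neq_0 by simp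
qed

lemma pderiv_X_mult_cint: "pderiv ([:0, 1:] * cint (Suc k)) = smult (of_nat (Suc k)) (cpoly ^ k)"
proof -
  have "pderiv (cpoly ^ Suc k - 1) = smult (qvar - 1) (smult (of_nat (Suc k)) (cpoly ^ k))"
    by (simp add: pderiv_diff pderiv_power_Suc cpoly_def pderiv_pCons del: power_Suc)
  then show ?thesis
    using qvar_minus_1_neq_0 unfolding X_mult_cint pderiv_smult by simp
qed

theorem mainTheorem5:
  fixes \<beta> :: "nat \<Rightarrow> Qq" and n :: nat
  assumes "is_qBC_numbers \<beta>"
  shows "poly_integral (qBC_poly \<beta> n) =
    [:0, 1:] * smult (1 / (qvar - 1) ^ n)
      (\<Sum>k\<le>n. smult (of_nat (n choose k) * (-1) ^ (n - k) / qint (k + 1)) (cint (k + 1)))"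
proof (rule poly_integral_eqI)
  let ?a = "\<lambda>k. of_nat (n choose k) * (-1) ^ (n - k) / qint (k + 1)"
  let ?I = "[:0, 1:] * smult (1 / (qvar - 1) ^ n) (\<Sum>k\<le>n. smult (?a k) (cint (k + 1)))"
  have "pderiv ?I = smult (1 / (qvar - 1) ^ n) (\<Sum>k\<le>n. smult (?a k) (pderiv ([:0, 1:] * cint (Suc k))))"
    by (simp only: mult_smult_right sum_distrib_left pderiv_smult pderiv_sum Suc_eq_plus1)
  also have "\<dots> = smult (1 / (qvar - 1) ^ n) (smult ((qvar - 1) ^ n) (qBC_poly \<beta> n))"
    unfolding pderiv_X_mult_cint qBC_poly_scaled[OF assms] smult_smult
    by (simp add: mult_ac del: of_nat_Suc)
  also have "\<dots> = qBC_poly \<beta> n"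
    using qvar_minus_1_neq_0 by simp
  finally show "pderiv ?I = qBC_poly \<beta> n" .
qed simp

end
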